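(* Let $n\ge2$, let $\mathbb{A}=(A_{ij})_{i,j=1}^n$ be an operator matrix as in the context, and assume that for all $i\ne j$ there are constants $c_{ij},d_{ij}\ge0$ with $\|A_{ij}x_j\|_{X_i}\le c_{ij}\|A_{jj}x_j\|_{X_j}+d_{ij}\|x_j\|_{X_j}$ for all $x_j\in\mathcal{D}(A_{jj})$ and $\sum_{i=1,i\ne j}^nc_{ij}<1$ for every $j$. Then $\sigma(\mathbb{A})\subset C(\mathbb{A})$ and $\sigma(\mathbb{A})\subset\bigcap_{k=1}^nS^*_k(\mathbb{A})$.
   Context: Let $X_1,\ldots,X_n$ be complex Banach spaces and $X=X_1\times\cdots\times X_n$ with norm $\|x\|=\sum_i\|x_i\|_{X_i}$. For $i,j$, $A_{ij}:\mathcal{D}(A_{ij})\subset X_j\to X_i$ are linear, $A_{ii}$ closed, and for $i\ne j$ $\mathcal{D}(A_{jj})\subset\mathcal{D}(A_{ij})$. $\mathbb{A}=(A_{ij})$ acts on $\mathcal{D}(A_{11})\times\cdots\times\mathcal{D}(A_{nn})$ by $(\mathbb{A}x)_i=\sum_jA_{ij}x_j$. $\sigma(S)$ is the set of $\lambda$ for which $\lambda-S$ is not bijective from $\mathcal{D}(S)$ with bounded inverse. For $i\ne j$, the Cassini oval $C_{ij}(\mathbb{A}):=\sigma(A_{ii})\cup\sigma(A_{jj})\cup\widetilde C_{ij}(\mathbb{A})$, where $\widetilde C_{ij}(\mathbb{A})$ is the set of $\lambda\notin\sigma(A_{ii})\cup\sigma(A_{jj})$ with $\big(\sum_{l\ne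 i}\|A_{li}(\lambda-A_{ii})^{-1}\|\big)\big(\sum_{l\ne j}\|A_{lj}(\lambda-A_{jj})^{-1}\|\big)\ge1$, and $C(\mathbb{A}):=\bigcup_{1\le i<j\le n}C_{ij}(\mathbb{A})$. For $j\ne k$ and $\lambda\notin\sigma(A_{kk})\cup\sigma(A_{jj})$, $\mathcal{R}^*_{kj}(\lambda):=\sum_{i=1,i\ne k}^n\big(\|A_{ik}(\lambda-A_{kk})^{-1}A_{kj}(\lambda-A_{jj})^{-1}\|+\|(1-\delta_{ij})A_{ij}(\lambda-A_{jj})^{-1}\|\big)$; $S^*_{kj}(\mathbb{A}):=\sigma(A_{kk})\cup\sigma(A_{jj})\cup\{\lambda\notin\sigma(A_{kk})\cup\sigma(A_{jj}):\mathcal{R}^*_{kj}(\lambda)\ge1\}$ and $S^*_k(\mathbb{A}):=\bigcup_{j\ne k}S^*_{kj}(\mathbb{A})$. *)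

theory Defs
  imports "HOL-Analysis.Analysis"
begin

class complex_normed_vector = real_normed_vector +
  fixes scaleC :: "complex \<Rightarrow> 'a \<Rightarrow> 'a" (infixr "*\<^sub>C" 75)
  assumes scaleC_add_right: "a *\<^sub>C (x + y) = a *\<^sub>C x + a *\<^sub>C y"
    and scaleC_add_left: "(a + b) *\<^sub>C x = a *\<^sub>C x + b *\<^sub>C x"
    and scaleC_scaleC: "a *\<^sub>C (b *\<^sub>C x) = (a * b) *\<^sub>C x"
    and scaleC_one: "1 *\<^sub>C x = x"
    and scaleR_scaleC: "scaleR r x = (complex_of_real r) *\<^sub>C x"
    and norm_scaleC: "norm (a *\<^sub>C x) = cmod a * norm x"

definition csubspace :: "'a::complex_normed_vector set \<Rightarrow> bool" where
  "csubspace S \<longleftrightarrow> 0 \<in> S \<and> (\<forall>x\<in>S. \<forall>y\<in>S. x + y \<in> S) \<and> (\<forall>c. \<forall>x\<in>S. c *\<^sub>C x \<in> S)"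

text \<open>A (complex) Banach space, realised as a complete complex subspace of an ambient space.\<close>
definition banach_subspace :: "'a::complex_normed_vector set \<Rightarrow> bool" where
  "banach_subspace X \<longleftrightarrow> csubspace X \<and> complete X"

definition lin_op :: "'a::complex_normed_vector set \<Rightarrow> 'a set \<Rightarrow> 'a set \<Rightarrow> ('a \<Rightarrow> 'a) \<Rightarrow> bool" where
  "lin_op Y Z D T \<longleftrightarrow> csubspace D \<and> D \<subseteq> Y \<and> T ` D \<subseteq> Z \<and>
     (\<forall>x\<in>D. \<forall>y\<in>D. T (x + y) = T x + T y) \<and> (\<forall>c. \<forall>x\<in>D. T (c *\<^sub>C x) = c *\<^sub>C T x)"

definition closed_op :: "'a::complex_normed_vector set \<Rightarrow> ('a \<Rightarrow> 'a) \<Rightarrow> bool" where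
  "closed_op D T \<longleftrightarrow> (\<forall>s x y. (\<forall>k. s k \<in> D) \<longrightarrow> s \<longlonglongrightarrow> x \<longrightarrow> (\<lambda>k. T (s k)) \<longlonglongrightarrow> y
       \<longrightarrow> x \<in> D \<and> T x = y)"

definition bdd_invertible :: "('b \<Rightarrow> real) \<Rightarrow> 'b set \<Rightarrow> 'b set \<Rightarrow> ('b \<Rightarrow> 'b) \<Rightarrow> bool" where
  "bdd_invertible N D Y T \<longleftrightarrow> bij_betw T D Y \<and> (\<exists>C. \<forall>y\<in>Y. N (inv_into D T y) \<le> C * N y)"

definition op_spectrum :: "'a set \<Rightarrow> 'a::complex_normed_vector set \<Rightarrow> ('a \<Rightarrow> 'a) \<Rightarrow> complex set" where
  "op_spectrum Y D S = {z. \<not> bdd_invertible norm D Y (\<lambda>x. z *\<^sub>C x - S x)}"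

text \<open>Resolvent (lambda - S)^{-1} (meaningful for lambda outside the spectrum).\<close>
definition resolv :: "'a set \<Rightarrow> ('a::complex_normed_vector \<Rightarrow> 'a) \<Rightarrow> complex \<Rightarrow> 'a \<Rightarrow> 'a" where
  "resolv D S z y = (THE x. x \<in> D \<and> z *\<^sub>C x - S x = y)"

definition opnorm :: "'a::real_normed_vector set \<Rightarrow> ('a \<Rightarrow> 'b::real_normed_vector) \<Rightarrow> ennreal" where
  "opnorm Y f = (SUP y\<in>{y\<in>Y. norm y \<le> 1}. ennreal (norm (f y)))"

text \<open>The operator matrix (indices 0..n-1) on X_0 x ... x X_{n-1}, elements represented
  as functions nat => 'a vanishing from n on, with norm the sum of the component norms.\<close>
definition prod_space :: "nat \<Rightarrow> (nat \<Rightarrow> 'a::zero set) \<Rightarrow> (nat \<Rightarrow> 'a) set" where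
  "prod_space n Y = {x. (\<forall>i<n. x i \<in> Y i) \<and> (\<forall>i\<ge>n. x i = 0)}"

definition prod_norm :: "nat \<Rightarrow> (nat \<Rightarrow> 'a::real_normed_vector) \<Rightarrow> real" where
  "prod_norm n x = (\<Sum>i<n. norm (x i))"

definition matrix_spectrum :: "nat \<Rightarrow> (nat \<Rightarrow> 'a set) \<Rightarrow> (nat \<Rightarrow> nat \<Rightarrow> 'a set)
    \<Rightarrow> (nat \<Rightarrow> nat \<Rightarrow> 'a::complex_normed_vector \<Rightarrow> 'a) \<Rightarrow> complex set" where
  "matrix_spectrum n X D A = {z. \<not> bdd_invertible (prod_norm n)
      (prod_space n (\<lambda>i. D i i)) (prod_space n X)
      (\<lambda>x i. if i < n then z *\<^sub>C x i - (\<Sum>j<n. A i j (x j)) else 0)}"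

definition diag_spec :: "(nat \<Rightarrow> 'a set) \<Rightarrow> (nat \<Rightarrow> nat \<Rightarrow> 'a set)
    \<Rightarrow> (nat \<Rightarrow> nat \<Rightarrow> 'a::complex_normed_vector \<Rightarrow> 'a) \<Rightarrow> nat \<Rightarrow> complex set" where
  "diag_spec X D A i = op_spectrum (X i) (D i i) (A i i)"

definition col_sum :: "nat \<Rightarrow> (nat \<Rightarrow> 'a set) \<Rightarrow> (nat \<Rightarrow> nat \<Rightarrow> 'a set)
    \<Rightarrow> (nat \<Rightarrow> nat \<Rightarrow> 'a::complex_normed_vector \<Rightarrow> 'a) \<Rightarrow> nat \<Rightarrow> complex \<Rightarrow> ennreal" where
  "col_sum n X D A i z = (\<Sum>l\<in>{..<n} - {i}. opnorm (X i) (\<lambda>y. A l i (resolv (D i i) (A i i) z y)))"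

definition cassini :: "nat \<Rightarrow> (nat \<Rightarrow> 'a set) \<Rightarrow> (nat \<Rightarrow> nat \<Rightarrow> 'a set)
    \<Rightarrow> (nat \<Rightarrow> nat \<Rightarrow> 'a::complex_normed_vector \<Rightarrow> 'a) \<Rightarrow> nat \<Rightarrow> nat \<Rightarrow> complex set" where
  "cassini n X D A i j = diag_spec X D A i \<union> diag_spec X D A j \<union>
     {z. z \<notin> diag_spec X D A i \<union> diag_spec X D A j \<and>
          col_sum n X D A i z * col_sum n X D A j z \<ge> 1}"

definition cassini_union :: "nat \<Rightarrow> (nat \<Rightarrow> 'a set) \<Rightarrow> (nat \<Rightarrow> nat \<Rightarrow> 'a set)
    \<Rightarrow> (nat \<Rightarrow> nat \<Rightarrow> 'a::complex_normed_vector \<Rightarrow> 'a) \<Rightarrow> complex set" where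
  "cassini_union n X D A = (\<Union>i<n. \<Union>j\<in>{i<..<n}. cassini n X D A i j)"

definition Rstar :: "nat \<Rightarrow> (nat \<Rightarrow> 'a set) \<Rightarrow> (nat \<Rightarrow> nat \<Rightarrow> 'a set)
    \<Rightarrow> (nat \<Rightarrow> nat \<Rightarrow> 'a::complex_normed_vector \<Rightarrow> 'a) \<Rightarrow> nat \<Rightarrow> nat \<Rightarrow> complex \<Rightarrow> ennreal" where
  "Rstar n X D A k j z = (\<Sum>i\<in>{..<n} - {k}.
      opnorm (X j) (\<lambda>y. A i k (resolv (D k k) (A k k) z (A k j (resolv (D j j) (A j j) z y))))
    + (if i = j then 0 else opnorm (X j) (\<lambda>y. A i j (resolv (D j j) (A j j) z y))))"

definition Sstar2 :: "nat \<Rightarrow> (nat \<Rightarrow> 'a set) \<Rightarrow> (nat \<Rightarrow> nat \<Rightarrow> 'a set)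
    \<Rightarrow> (nat \<Rightarrow> nat \<Rightarrow> 'a::complex_normed_vector \<Rightarrow> 'a) \<Rightarrow> nat \<Rightarrow> nat \<Rightarrow> complex set" where
  "Sstar2 n X D A k j = diag_spec X D A k \<union> diag_spec X D A j \<union>
     {z. z \<notin> diag_spec X D A k \<union> diag_spec X D A j \<and> Rstar n X D A k j z \<ge> 1}"

definition Sstar :: "nat \<Rightarrow> (nat \<Rightarrow> 'a set) \<Rightarrow> (nat \<Rightarrow> nat \<Rightarrow> 'a set)
    \<Rightarrow> (nat \<Rightarrow> nat \<Rightarrow> 'a::complex_normed_vector \<Rightarrow> 'a) \<Rightarrow> nat \<Rightarrow> complex set" where
  "Sstar n X D A k = (\<Union>j\<in>{..<n} - {k}. Sstar2 n X D A k j)"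

end

theory Submission
  imports Defs
begin

text \<open>
  Fix z in the resolvent sets of all diagonal entries and put K i j = A i j (z - A j j)^-1 for
  i \<noteq> j, K i i = 0. The relative bounds make every K i j bounded, and the substitution
  u i = (z - A i i) x i turns (z - \<A>) x = y into the coupled system u = y + K u. Hence z lies in
  the resolvent set of \<A> as soon as this system is uniquely solvable with a solution bounded in
  terms of y.

  Outside the Cassini ovals the column sums r j of (\<parallel>K i j\<parallel>) satisfy r i r j < 1 for i \<noteq> j, so at
  most one of them reaches 1, and suitable positive weights w turn K into a strict contraction for
  the norm \<Sum> w i \<parallel>u i\<parallel>; Banach's fixed point theorem solves the system. Outside S*_k, eliminating
  u k leaves a system on the other indices with coupling K i k K k j + K i j, whose column sums are
  bounded by R*_kj(z) < 1, and its solutions extend back to the full system.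
\<close>

lemma csubspace_imp_subspace: "csubspace S \<Longrightarrow> subspace S"
  by (simp add: csubspace_def subspace_def scaleR_scaleC)

lemma additive_on_diff:
  fixes f :: "'a::real_vector \<Rightarrow> 'b::ab_group_add"
  assumes "subspace S" "\<And>x y. x \<in> S \<Longrightarrow> y \<in> S \<Longrightarrow> f (x + y) = f x + f y" "x \<in> S" "y \<in> S"
  shows "f (x - y) = f x - f y"
  using assms(2)[of "x - y" y] assms(1,3,4) by (simp add: subspace_diff)

lemma additive_on_sum:
  fixes f :: "'a::real_vector \<Rightarrow> 'b::ab_group_add"
  assumes S: "subspace S" and add: "\<And>x y. x \<in> S \<Longrightarrow> y \<in> S \<Longrightarrow> f (x + y) = f x + f y"
    and g: "\<And>j. j \<in> J \<Longrightarrow> g j \<in> S"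
  shows "f (\<Sum>j\<in>J. g j) = (\<Sum>j\<in>J. f (g j))"
  using g
proof (induction J rule: infinite_finite_induct)
  case (insert j J)
  then have "f (g j + sum g J) = f (g j) + f (sum g J)"
    by (intro add) (auto intro: subspace_sum[OF S])
  with insert show ?case by simp
qed (use add[of 0 0] subspace_0[OF S] in simp_all)

lemma scaleC_scaleR_commute: "a *\<^sub>C (r *\<^sub>R x) = r *\<^sub>R (a *\<^sub>C (x :: 'a::complex_normed_vector))"
  by (simp add: scaleR_scaleC scaleC_scaleC mult.commute)

lemma lin_op_scaleR: "lin_op Y Z D T \<Longrightarrow> x \<in> D \<Longrightarrow> T (r *\<^sub>R x) = r *\<^sub>R T x"
  by (simp add: lin_op_def scaleR_scaleC)

lemma opnorm_le_ennreal:
  assumes "0 \<le> M" "\<And>y. y \<in> Y \<Longrightarrow> norm (f y) \<le> M * norm y"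
  shows "opnorm Y f \<le> ennreal M"
  unfolding opnorm_def
proof (rule SUP_least)
  fix y assume "y \<in> {y \<in> Y. norm y \<le> 1}"
  then have "norm (f y) \<le> M" using assms by (smt (verit) mem_Collect_eq mult_left_le norm_ge_zero)
  then show "ennreal (norm (f y)) \<le> ennreal M" by (rule ennreal_leI)
qed

lemma norm_le_opnorm:
  assumes S: "subspace Y" and hom: "\<And>r y. y \<in> Y \<Longrightarrow> f (r *\<^sub>R y) = r *\<^sub>R f y"
    and finite: "opnorm Y f < \<infinity>" and y: "y \<in> Y"
  shows "norm (f y) \<le> enn2real (opnorm Y f) * norm y"
proof (cases "y = 0")
  case True
  then show ?thesis using hom[of 0 0] subspace_0[OF S] by simp
next
  case False
  define e where "e = (1 / norm y) *\<^sub>R y"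
  have "e \<in> Y" using S y by (simp add: e_def subspace_scale)
  moreover have "norm e = 1" using False by (simp add: e_def)
  ultimately have "ennreal (norm (f e)) \<le> opnorm Y f"
    unfolding opnorm_def by (intro SUP_upper) auto
  also have "\<dots> = ennreal (enn2real (opnorm Y f))" using finite by (simp add: ennreal_enn2real)
  finally have "norm (f e) \<le> enn2real (opnorm Y f)" by (simp add: ennreal_le_iff)
  moreover have "norm (f e) = norm (f y) / norm y" using hom y by (simp add: e_def)
  ultimately show ?thesis using False by (simp add: divide_le_eq mult.commute)
qed

lemma opnorm_less_top:
  fixes f :: "'a::real_normed_vector \<Rightarrow> 'b::real_normed_vector"
  assumes "\<And>y. y \<in> Y \<Longrightarrow> norm (f y) \<le> M * norm y"
  shows "opnorm Y f < \<infinity>"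
proof -
  have "opnorm Y f \<le> ennreal (max M 0)"
  proof (rule opnorm_le_ennreal)
    fix y assume "y \<in> Y"
    then show "norm (f y) \<le> max M 0 * norm y"
      using assms[of y] mult_right_mono[OF max.cobounded1[of M 0] norm_ge_zero[of y]] by linarith
  qed simp
  then show ?thesis unfolding infinity_ennreal_def using ennreal_less_top[of "max M 0"] by (rule le_less_trans)
qed

lemma bdd_invertibleI:
  assumes "inj_on T D" "T ` D \<subseteq> Y" "\<And>y. y \<in> Y \<Longrightarrow> \<exists>x\<in>D. T x = y \<and> N x \<le> C * N y"
  shows "bdd_invertible N D Y T"
  unfolding bdd_invertible_def bij_betw_def
proof (intro conjI exI ballI)
  show "T ` D = Y" using assms(2,3) by blast
  fix y assume "y \<in> Y"
  then obtain x where "x \<in> D" "T x = y" "N x \<le> C * N y" using assms(3) by blast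
  then show "N (inv_into D T y) \<le> C * N y" using assms(1) inv_into_f_f by metis
qed (use assms in simp)

section \<open>Weighted norms on finite products\<close>

definition weighted_norm :: "'i set \<Rightarrow> ('i \<Rightarrow> real) \<Rightarrow> ('i \<Rightarrow> 'a::real_normed_vector) \<Rightarrow> real"
  where "weighted_norm I w v = (\<Sum>i\<in>I. w i * norm (v i))"

lemma weighted_norm_nonneg: "(\<And>i. i \<in> I \<Longrightarrow> 0 \<le> w i) \<Longrightarrow> 0 \<le> weighted_norm I w v"
  unfolding weighted_norm_def by (intro sum_nonneg) simp

lemma weighted_norm_eq_0_iff:
  assumes "finite I" "\<And>i. i \<in> I \<Longrightarrow> 0 < w i"
  shows "weighted_norm I w v = 0 \<longleftrightarrow> (\<forall>i\<in>I. v i = 0)"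
proof -
  have "(\<forall>i\<in>I. w i * norm (v i) = 0) \<longleftrightarrow> (\<forall>i\<in>I. v i = 0)"
    using assms(2) by (metis mult_eq_0_iff norm_eq_zero less_irrefl)
  then show ?thesis
    unfolding weighted_norm_def using assms by (subst sum_nonneg_eq_0_iff) (auto simp: less_imp_le)
qed

lemma weighted_norm_component_le:
  assumes "finite I" "\<And>i. i \<in> I \<Longrightarrow> 0 \<le> w i" "i \<in> I"
  shows "w i * norm (v i) \<le> weighted_norm I w v"
  unfolding weighted_norm_def by (rule member_le_sum) (use assms in auto)

lemma weighted_norm_le_sum_norm:
  assumes "finite I" "\<And>i. i \<in> I \<Longrightarrow> 0 \<le> w i"
  shows "weighted_norm I w v \<le> (\<Sum>i\<in>I. w i) * (\<Sum>i\<in>I. norm (v i))"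
  unfolding weighted_norm_def sum_distrib_right
  by (intro sum_mono mult_left_mono member_le_sum) (use assms in auto)

lemma sum_norm_le_weighted_norm:
  assumes "finite I" "\<And>i. i \<in> I \<Longrightarrow> 0 < w i"
  shows "(\<Sum>i\<in>I. norm (v i)) \<le> (\<Sum>i\<in>I. 1 / w i) * weighted_norm I w v"
  unfolding sum_distrib_right
proof (intro sum_mono)
  fix i assume i: "i \<in> I"
  have "w i * norm (v i) \<le> weighted_norm I w v"
    using assms i by (intro weighted_norm_component_le) (auto simp: less_imp_le)
  then show "norm (v i) \<le> 1 / w i * weighted_norm I w v"
    using assms(2)[OF i] by (simp add: field_simps)
qed

lemma weighted_norm_coupling_le:
  assumes w: "\<And>i. i \<in> I \<Longrightarrow> 0 \<le> w i"
    and bound: "\<And>i j. i \<in> I \<Longrightarrow> j \<in> I \<Longrightarrow> norm (K i j (v j)) \<le> b i j * norm (v j)"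
    and column: "\<And>j. j \<in> I \<Longrightarrow> (\<Sum>i\<in>I. w i * b i j) \<le> q * w j"
  shows "weighted_norm I w (\<lambda>i. \<Sum>j\<in>I. K i j (v j)) \<le> q * weighted_norm I w v"
proof -
  have "weighted_norm I w (\<lambda>i. \<Sum>j\<in>I. K i j (v j)) \<le> (\<Sum>i\<in>I. w i * (\<Sum>j\<in>I. b i j * norm (v j)))"
    unfolding weighted_norm_def
    by (intro sum_mono mult_left_mono order_trans[OF norm_sum]) (use w bound in auto)
  also have "\<dots> = (\<Sum>i\<in>I. \<Sum>j\<in>I. w i * b i j * norm (v j))"
    by (simp add: sum_distrib_left mult.assoc)
  also have "\<dots> = (\<Sum>j\<in>I. (\<Sum>i\<in>I. w i * b i j) * norm (v j))"
    by (subst sum.swap) (simp add: sum_distrib_right)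
  also have "\<dots> \<le> (\<Sum>j\<in>I. q * w j * norm (v j))"
    by (intro sum_mono mult_right_mono) (use column in auto)
  also have "\<dots> = q * weighted_norm I w v"
    by (simp add: weighted_norm_def sum_distrib_left mult.assoc)
  finally show ?thesis .
qed

lemma weighted_norm_triangle:
  assumes "\<And>i. i \<in> I \<Longrightarrow> 0 \<le> w i"
  shows "weighted_norm I w (\<lambda>i. a i + b i) \<le> weighted_norm I w a + weighted_norm I w b"
  unfolding weighted_norm_def sum.distrib[symmetric] distrib_left[symmetric]
  using assms by (intro sum_mono mult_left_mono norm_triangle_ineq) auto

lemma weighted_product_metric:
  assumes "finite I" "\<And>i. i \<in> I \<Longrightarrow> 0 < w i"
  shows "Metric_space (Pi\<^sub>E I X) (\<lambda>u v. weighted_norm I w (\<lambda>i. u i - v i))"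
proof
  show "0 \<le> weighted_norm I w (\<lambda>i. u i - v i)" for u v
    using assms by (intro weighted_norm_nonneg) (auto intro: less_imp_le)
  show "weighted_norm I w (\<lambda>i. u i - v i) = weighted_norm I w (\<lambda>i. v i - u i)" for u v
    by (simp add: weighted_norm_def norm_minus_commute)
  show "weighted_norm I w (\<lambda>i. u i - v i) = 0 \<longleftrightarrow> u = v" if "u \<in> Pi\<^sub>E I X" "v \<in> Pi\<^sub>E I X" for u v
    using that by (auto simp: weighted_norm_eq_0_iff[OF assms] PiE_def intro: extensionalityI)
  show "weighted_norm I w (\<lambda>i. u i - x i)
      \<le> weighted_norm I w (\<lambda>i. u i - v i) + weighted_norm I w (\<lambda>i. v i - x i)" for u v x
    using weighted_norm_triangle[of I w "\<lambda>i. u i - v i" "\<lambda>i. v i - x i"] assms by (simp add: less_imp_le)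
qed

lemma weighted_product_mcomplete:
  fixes X :: "'i \<Rightarrow> 'a::real_normed_vector set"
  assumes I: "finite I" and w: "\<And>i. i \<in> I \<Longrightarrow> 0 < w i" and complete: "\<And>i. i \<in> I \<Longrightarrow> complete (X i)"
  shows "Metric_space.mcomplete (Pi\<^sub>E I X) (\<lambda>u v. weighted_norm I w (\<lambda>i. u i - v i))"
proof -
  interpret Metric_space "Pi\<^sub>E I X" "\<lambda>u v. weighted_norm I w (\<lambda>i. u i - v i)"
    by (rule weighted_product_metric[OF I w])
  have w_nonneg: "\<And>i. i \<in> I \<Longrightarrow> 0 \<le> w i" using w by (simp add: less_imp_le)
  show ?thesis
    unfolding mcomplete_def
  proof (intro allI impI)
    fix \<sigma> assume \<sigma>: "MCauchy \<sigma>"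
    then have \<sigma>_in: "\<sigma> m \<in> Pi\<^sub>E I X" for m by (auto simp: MCauchy_def)
    have component_Cauchy: "Cauchy (\<lambda>m. \<sigma> m i)" if i: "i \<in> I" for i
    proof (rule metric_CauchyI)
      fix e :: real assume "0 < e"
      then obtain N where
        N: "\<And>m m'. N \<le> m \<Longrightarrow> N \<le> m' \<Longrightarrow> weighted_norm I w (\<lambda>i. \<sigma> m i - \<sigma> m' i) < w i * e"
        using \<sigma> w[OF i] unfolding MCauchy_def by (meson mult_pos_pos)
      have "dist (\<sigma> m i) (\<sigma> m' i) < e" if "N \<le> m" "N \<le> m'" for m m'
      proof -
        have "w i * norm (\<sigma> m i - \<sigma> m' i) < w i * e"
          using weighted_norm_component_le[of I w i "\<lambda>i. \<sigma> m i - \<sigma> m' i", OF I w_nonneg i] N[OF that]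
          by linarith
        with w[OF i] show ?thesis by (simp add: dist_norm mult_less_cancel_left_pos)
      qed
      then show "\<exists>N. \<forall>m\<ge>N. \<forall>m'\<ge>N. dist (\<sigma> m i) (\<sigma> m' i) < e" by blast
    qed
    have "\<forall>i\<in>I. \<exists>l\<in>X i. (\<lambda>m. \<sigma> m i) \<longlonglongrightarrow> l"
    proof
      fix i assume i: "i \<in> I"
      have "\<sigma> m i \<in> X i" for m using \<sigma>_in i by (auto simp: PiE_iff)
      then show "\<exists>l\<in>X i. (\<lambda>m. \<sigma> m i) \<longlonglongrightarrow> l"
        using complete_def[THEN iffD1, OF complete[OF i], rule_format, of "\<lambda>m. \<sigma> m i"]
          component_Cauchy[OF i] by blast
    qed
    then obtain l where l: "\<And>i. i \<in> I \<Longrightarrow> l i \<in> X i \<and> (\<lambda>m. \<sigma> m i) \<longlonglongrightarrow> l i" by metis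
    have "((\<lambda>m. \<Sum>i\<in>I. w i * norm (\<sigma> m i - l i)) \<longlongrightarrow> (\<Sum>i\<in>I. w i * norm (l i - l i))) sequentially"
      by (intro tendsto_intros) (use l in auto)
    then have "limitin mtopology \<sigma> (restrict l I) sequentially"
      unfolding limitin_metric_dist_null using \<sigma>_in l by (auto simp: weighted_norm_def)
    then show "\<exists>x. limitin mtopology \<sigma> x sequentially" by blast
  qed
qed

section \<open>Coupled systems \<open>u = y + K u\<close>\<close>

definition solves_system ::
    "'i set \<Rightarrow> ('i \<Rightarrow> 'i \<Rightarrow> 'a \<Rightarrow> 'a) \<Rightarrow> ('i \<Rightarrow> 'a) \<Rightarrow> ('i \<Rightarrow> 'a::comm_monoid_add) \<Rightarrow> bool"
  where "solves_system I K y u \<longleftrightarrow> (\<forall>i\<in>I. u i = y i + (\<Sum>j\<in>I. K i j (u j)))"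

lemma solves_systemD: "solves_system I K y u \<Longrightarrow> i \<in> I \<Longrightarrow> u i = y i + (\<Sum>j\<in>I. K i j (u j))"
  unfolding solves_system_def by blast

text \<open>That is, 1 - K is a bijection of \<Pi> i\<in>I. X i with inverse bounded for the sum of the norms.\<close>
definition boundedly_solvable ::
    "'i set \<Rightarrow> ('i \<Rightarrow> 'a::real_normed_vector set) \<Rightarrow> ('i \<Rightarrow> 'i \<Rightarrow> 'a \<Rightarrow> 'a) \<Rightarrow> bool"
  where "boundedly_solvable I X K \<longleftrightarrow>
    (\<exists>C\<ge>0. \<forall>y\<in>Pi I X. \<exists>u\<in>Pi I X. solves_system I K y u \<and>
       (\<Sum>i\<in>I. norm (u i)) \<le> C * (\<Sum>i\<in>I. norm (y i))) \<and>
    (\<forall>y. \<forall>u\<in>Pi I X. \<forall>u'\<in>Pi I X.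
       solves_system I K y u \<longrightarrow> solves_system I K y u' \<longrightarrow> (\<forall>i\<in>I. u i = u' i))"

locale coupled_system =
  fixes I :: "'i set" and X :: "'i \<Rightarrow> 'a::real_normed_vector set" and K :: "'i \<Rightarrow> 'i \<Rightarrow> 'a \<Rightarrow> 'a"
  assumes finite_index: "finite I"
    and subspace_X: "\<And>i. i \<in> I \<Longrightarrow> subspace (X i)"
    and complete_X: "\<And>i. i \<in> I \<Longrightarrow> complete (X i)"
    and K_maps: "\<And>i j v. i \<in> I \<Longrightarrow> j \<in> I \<Longrightarrow> v \<in> X j \<Longrightarrow> K i j v \<in> X i"
    and K_add: "\<And>i j v v'. i \<in> I \<Longrightarrow> j \<in> I \<Longrightarrow> v \<in> X j \<Longrightarrow> v' \<in> X j \<Longrightarrow>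
                  K i j (v + v') = K i j v + K i j v'"
begin

lemma K_diff: "i \<in> I \<Longrightarrow> j \<in> I \<Longrightarrow> v \<in> X j \<Longrightarrow> v' \<in> X j \<Longrightarrow> K i j (v - v') = K i j v - K i j v'"
  by (rule additive_on_diff[OF subspace_X]) (auto intro: K_add)

lemma K_sum: "i \<in> I \<Longrightarrow> j \<in> I \<Longrightarrow> (\<And>l. l \<in> L \<Longrightarrow> g l \<in> X j) \<Longrightarrow> K i j (\<Sum>l\<in>L. g l) = (\<Sum>l\<in>L. K i j (g l))"
  by (rule additive_on_sum[OF subspace_X[of j]]) (auto intro: K_add)

lemma coupling_in: "i \<in> I \<Longrightarrow> u \<in> Pi I X \<Longrightarrow> (\<Sum>j\<in>I. K i j (u j)) \<in> X i"
  by (auto intro: subspace_sum subspace_X K_maps)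

lemma coupling_diff:
  "i \<in> I \<Longrightarrow> u \<in> Pi I X \<Longrightarrow> v \<in> Pi I X \<Longrightarrow>
    (\<Sum>j\<in>I. K i j (u j)) - (\<Sum>j\<in>I. K i j (v j)) = (\<Sum>j\<in>I. K i j (u j - v j))"
  by (simp add: sum_subtractf K_diff Pi_iff)

lemma solves_system_rhs_in:
  assumes u: "u \<in> Pi I X" and solves: "solves_system I K y u"
  shows "y \<in> Pi I X"
proof
  fix i assume i: "i \<in> I"
  have "u i - (\<Sum>j\<in>I. K i j (u j)) \<in> X i"
    using u i by (intro subspace_diff[OF subspace_X[OF i]] coupling_in) auto
  then show "y i \<in> X i" using solves_systemD[OF solves i] by simp
qed

lemma solves_system_diff:
  assumes "u \<in> Pi I X" "u' \<in> Pi I X" "solves_system I K y u" "solves_system I K y u'"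
  shows "solves_system I K (\<lambda>_. 0) (\<lambda>i. u i - u' i)"
  unfolding solves_system_def
proof
  fix i assume i: "i \<in> I"
  have "u i - u' i = (\<Sum>j\<in>I. K i j (u j)) - (\<Sum>j\<in>I. K i j (u' j))"
    using solves_systemD[OF assms(3) i] solves_systemD[OF assms(4) i] by simp
  then show "u i - u' i = 0 + (\<Sum>j\<in>I. K i j (u j - u' j))"
    using coupling_diff[OF i assms(1,2)] by simp
qed

context
  fixes b :: "'i \<Rightarrow> 'i \<Rightarrow> real" and w :: "'i \<Rightarrow> real" and q :: real
  assumes bound: "\<And>i j v. i \<in> I \<Longrightarrow> j \<in> I \<Longrightarrow> v \<in> X j \<Longrightarrow> norm (K i j v) \<le> b i j * norm v"
    and w_pos: "\<And>i. i \<in> I \<Longrightarrow> 0 < w i"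
    and column: "\<And>j. j \<in> I \<Longrightarrow> (\<Sum>i\<in>I. w i * b i j) \<le> q * w j"
    and q_less_1: "q < 1"
begin

lemma w_nonneg: "i \<in> I \<Longrightarrow> 0 \<le> w i"
  using w_pos by (simp add: less_imp_le)

lemma coupling_weighted_norm_le: "v \<in> Pi I X \<Longrightarrow>
    weighted_norm I w (\<lambda>i. \<Sum>j\<in>I. K i j (v j)) \<le> q * weighted_norm I w v"
  by (rule weighted_norm_coupling_le[OF w_nonneg _ column]) (auto intro: bound)

lemma weighted_norm_solution_le:
  assumes u: "u \<in> Pi I X" and solves: "solves_system I K y u"
  shows "(1 - q) * weighted_norm I w u \<le> weighted_norm I w y"
proof -
  have "weighted_norm I w u = weighted_norm I w (\<lambda>i. y i + (\<Sum>j\<in>I. K i j (u j)))"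
    using solves unfolding solves_system_def weighted_norm_def by (metis (no_types, lifting) sum.cong)
  also have "\<dots> \<le> weighted_norm I w y + weighted_norm I w (\<lambda>i. \<Sum>j\<in>I. K i j (u j))"
    by (rule weighted_norm_triangle[OF w_nonneg])
  also have "\<dots> \<le> weighted_norm I w y + q * weighted_norm I w u"
    using coupling_weighted_norm_le[OF u] by simp
  finally show ?thesis by (simp add: algebra_simps)
qed

lemma solves_system_unique:
  assumes u: "u \<in> Pi I X" "u' \<in> Pi I X" "solves_system I K y u" "solves_system I K y u'"
  shows "\<forall>i\<in>I. u i = u' i"
proof -
  have "(\<lambda>i. u i - u' i) \<in> Pi I X" using u by (auto intro: subspace_diff[OF subspace_X])
  from weighted_norm_solution_le[OF this solves_system_diff[OF u]]
  have "(1 - q) * weighted_norm I w (\<lambda>i. u i - u' i) \<le> 0"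
    by (simp add: weighted_norm_def)
  moreover have "0 \<le> weighted_norm I w (\<lambda>i. u i - u' i)"
    by (rule weighted_norm_nonneg) (use w_nonneg in auto)
  ultimately have "weighted_norm I w (\<lambda>i. u i - u' i) = 0"
    using q_less_1 by (simp add: mult_le_0_iff)
  then show ?thesis by (simp add: weighted_norm_eq_0_iff[OF finite_index w_pos])
qed

lemma solves_system_exists:
  assumes y: "y \<in> Pi I X"
  shows "\<exists>u\<in>Pi I X. solves_system I K y u"
proof -
  define d where "d u v = weighted_norm I w (\<lambda>i. u i - v i)" for u v :: "'i \<Rightarrow> 'a"
  define F where "F u = restrict (\<lambda>i. y i + (\<Sum>j\<in>I. K i j (u j))) I" for u
  interpret Metric_space "Pi\<^sub>E I X" d
    unfolding d_def by (rule weighted_product_metric[OF finite_index w_pos])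
  have complete: mcomplete
    unfolding d_def by (rule weighted_product_mcomplete[OF finite_index w_pos complete_X])
  have nonempty: "Pi\<^sub>E I X \<noteq> {}"
    using subspace_0[OF subspace_X] by (auto simp: PiE_eq_empty_iff)
  have F: "F \<in> Pi\<^sub>E I X \<rightarrow> Pi\<^sub>E I X"
    using y by (auto simp: F_def PiE_iff intro!: subspace_add[OF subspace_X] coupling_in)
  have "d (F u) (F v) \<le> q * d u v" if u: "u \<in> Pi\<^sub>E I X" and v: "v \<in> Pi\<^sub>E I X" for u v
  proof -
    have "d (F u) (F v) = weighted_norm I w (\<lambda>i. \<Sum>j\<in>I. K i j (u j - v j))"
      using u v by (simp add: d_def F_def weighted_norm_def coupling_diff PiE_iff)
    also have "\<dots> \<le> q * d u v"
      unfolding d_def using u v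
      by (intro coupling_weighted_norm_le) (auto intro: subspace_diff[OF subspace_X] simp: PiE_iff)
    finally show ?thesis .
  qed
  then obtain u where "u \<in> Pi\<^sub>E I X" "F u = u"
    using Banach_fixedpoint_thm[OF complete nonempty F q_less_1] by blast
  then show ?thesis
    by (intro bexI[of _ u]) (auto simp: solves_system_def F_def PiE_iff fun_eq_iff split: if_splits)
qed

lemma solution_sum_norm_le:
  assumes u: "u \<in> Pi I X" "solves_system I K y u"
  shows "(\<Sum>i\<in>I. norm (u i)) \<le> (\<Sum>i\<in>I. 1 / w i) * (\<Sum>i\<in>I. w i) / (1 - q) * (\<Sum>i\<in>I. norm (y i))"
proof -
  have factor: "0 \<le> (\<Sum>i\<in>I. 1 / w i) / (1 - q)"
    using w_pos q_less_1 by (intro divide_nonneg_pos sum_nonneg) (auto simp: less_imp_le)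
  have "(\<Sum>i\<in>I. norm (u i)) \<le> (\<Sum>i\<in>I. 1 / w i) * weighted_norm I w u"
    by (rule sum_norm_le_weighted_norm[OF finite_index w_pos])
  also have "\<dots> \<le> (\<Sum>i\<in>I. 1 / w i) / (1 - q) * weighted_norm I w y"
    using mult_left_mono[OF weighted_norm_solution_le[OF u] factor] q_less_1 by simp
  also have "\<dots> \<le> (\<Sum>i\<in>I. 1 / w i) / (1 - q) * ((\<Sum>i\<in>I. w i) * (\<Sum>i\<in>I. norm (y i)))"
    by (rule mult_left_mono[OF weighted_norm_le_sum_norm[OF finite_index w_nonneg] factor])
  finally show ?thesis by simp
qed

end

lemma weighted_contraction_boundedly_solvable:
  assumes bound: "\<And>i j v. i \<in> I \<Longrightarrow> j \<in> I \<Longrightarrow> v \<in> X j \<Longrightarrow> norm (K i j v) \<le> b i j * norm v"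
    and w: "\<And>i. i \<in> I \<Longrightarrow> 0 < w i"
    and column: "\<And>j. j \<in> I \<Longrightarrow> (\<Sum>i\<in>I. w i * b i j) < w j"
  shows "boundedly_solvable I X K"
proof -
  define q where "q = Max (insert 0 ((\<lambda>j. (\<Sum>i\<in>I. w i * b i j) / w j) ` I))"
  have q_less_1: "q < 1"
    using finite_index column w by (auto simp: q_def divide_less_eq)
  have column_q: "(\<Sum>i\<in>I. w i * b i j) \<le> q * w j" if j: "j \<in> I" for j
  proof -
    have "(\<Sum>i\<in>I. w i * b i j) / w j \<le> q" using finite_index j by (auto simp: q_def)
    then show ?thesis using w[OF j] by (simp add: divide_le_eq)
  qed
  define C where "C = (\<Sum>i\<in>I. 1 / w i) * (\<Sum>i\<in>I. w i) / (1 - q)"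
  have "0 \<le> C"
    unfolding C_def using w q_less_1
    by (intro divide_nonneg_pos mult_nonneg_nonneg sum_nonneg) (auto simp: less_imp_le)
  moreover have "\<exists>u\<in>Pi I X. solves_system I K y u \<and> (\<Sum>i\<in>I. norm (u i)) \<le> C * (\<Sum>i\<in>I. norm (y i))"
    if y: "y \<in> Pi I X" for y
  proof -
    obtain u where u: "u \<in> Pi I X" "solves_system I K y u"
      using solves_system_exists[OF bound w column_q q_less_1 y] by blast
    then show ?thesis
      using solution_sum_norm_le[OF bound w column_q q_less_1 u] unfolding C_def by blast
  qed
  moreover note solves_system_unique[OF bound w column_q q_less_1]
  ultimately show ?thesis unfolding boundedly_solvable_def by blast
qed

lemma coupled_system_eliminate:
  assumes "k \<in> I"
  shows "coupled_system (I - {k}) X (\<lambda>i j v. K i k (K k j v) + K i j v)"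
proof
  fix i j v v' assume ij: "i \<in> I - {k}" "j \<in> I - {k}" and v: "v \<in> X j" "v' \<in> X j"
  show "K i k (K k j v) + K i j v \<in> X i"
    using assms ij v by (auto intro: subspace_add[OF subspace_X] K_maps)
  show "K i k (K k j (v + v')) + K i j (v + v') = K i k (K k j v) + K i j v + (K i k (K k j v') + K i j v')"
    using assms ij v by (simp add: K_add K_maps)
qed (use finite_index subspace_X complete_X in auto)

context
  fixes k assumes k: "k \<in> I" and K_kk: "\<And>v. v \<in> X k \<Longrightarrow> K k k v = 0"
begin

lemma sum_remove_k: "(\<Sum>j\<in>I. f j) = f k + (\<Sum>j\<in>I - {k}. f j)"
  by (rule sum.remove[OF finite_index k])

lemma K_through_k:
  assumes i: "i \<in> I" and x: "x \<in> X k" and u: "u \<in> Pi (I - {k}) X"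
  shows "K i k (x + (\<Sum>j\<in>I - {k}. K k j (u j))) = K i k x + (\<Sum>j\<in>I - {k}. K i k (K k j (u j)))"
proof -
  have "(\<Sum>j\<in>I - {k}. K k j (u j)) \<in> X k"
    using u k by (auto intro: subspace_sum[OF subspace_X] K_maps)
  moreover have "K i k (\<Sum>j\<in>I - {k}. K k j (u j)) = (\<Sum>j\<in>I - {k}. K i k (K k j (u j)))"
    by (rule K_sum) (use i k u in \<open>auto intro: K_maps\<close>)
  ultimately show ?thesis using K_add[OF i k x] by simp
qed

lemma solves_system_eliminate:
  assumes u: "u \<in> Pi I X" and solves: "solves_system I K y u"
  shows "u k = y k + (\<Sum>j\<in>I - {k}. K k j (u j))"
    and "solves_system (I - {k}) (\<lambda>i j v. K i k (K k j v) + K i j v) (\<lambda>i. y i + K i k (y k)) u"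
proof -
  define S where "S = (\<Sum>j\<in>I - {k}. K k j (u j))"
  have S: "S \<in> X k" using u k by (auto simp: S_def intro: subspace_sum[OF subspace_X] K_maps)
  have "K k k (u k) = 0" using K_kk u k by auto
  with solves_systemD[OF solves k, unfolded sum_remove_k]
  show uk: "u k = y k + S" by (metis S_def add.left_neutral)
  have "y k = u k - S" using uk by simp
  then have yk: "y k \<in> X k" using u k S by (simp add: Pi_iff subspace_diff[OF subspace_X[OF k]])
  show "solves_system (I - {k}) (\<lambda>i j v. K i k (K k j v) + K i j v) (\<lambda>i. y i + K i k (y k)) u"
    unfolding solves_system_def
  proof
    fix i assume i: "i \<in> I - {k}"
    have "u i = y i + (K i k (u k) + (\<Sum>j\<in>I - {k}. K i j (u j)))"
      using solves_systemD[OF solves] i unfolding sum_remove_k by blast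
    also have "K i k (u k) = K i k (y k) + (\<Sum>j\<in>I - {k}. K i k (K k j (u j)))"
      using i u unfolding uk S_def by (intro K_through_k yk) auto
    finally show "u i = y i + K i k (y k) + (\<Sum>j\<in>I - {k}. K i k (K k j (u j)) + K i j (u j))"
      by (simp add: sum.distrib algebra_simps)
  qed
qed

lemma extend_in_Pi:
  assumes y: "y \<in> Pi I X" and u: "u \<in> Pi (I - {k}) X"
  shows "u(k := y k + (\<Sum>j\<in>I - {k}. K k j (u j))) \<in> Pi I X"
  using y u k by (auto intro!: subspace_add[OF subspace_X] subspace_sum[OF subspace_X] K_maps)

lemma solves_system_extend:
  assumes y: "y \<in> Pi I X" and u: "u \<in> Pi (I - {k}) X"
    and solves: "solves_system (I - {k}) (\<lambda>i j v. K i k (K k j v) + K i j v) (\<lambda>i. y i + K i k (y k)) u"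
  shows "solves_system I K y (u(k := y k + (\<Sum>j\<in>I - {k}. K k j (u j))))"
    (is "solves_system I K y ?u")
proof -
  define S where "S = (\<Sum>j\<in>I - {k}. K k j (u j))"
  have S: "S \<in> X k" using u k by (auto simp: S_def intro: subspace_sum[OF subspace_X] K_maps)
  have sum_u: "(\<Sum>j\<in>I - {k}. f j (?u j)) = (\<Sum>j\<in>I - {k}. f j (u j))" for f :: "'i \<Rightarrow> 'a \<Rightarrow> 'a"
    by (rule sum.cong) auto
  have uk: "?u k \<in> X k" using y k S by (auto simp: S_def intro: subspace_add[OF subspace_X])
  show ?thesis
    unfolding solves_system_def
  proof
    fix i assume i: "i \<in> I"
    show "?u i = y i + (\<Sum>j\<in>I. K i j (?u j))"
    proof (cases "i = k")
      case True
      then show ?thesis using K_kk[OF uk] by (simp add: sum_remove_k sum_u S_def)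
    next
      case False
      then have i': "i \<in> I - {k}" using i by simp
      have "K i k (?u k) = K i k (y k) + (\<Sum>j\<in>I - {k}. K i k (K k j (u j)))"
        using K_through_k[OF i _ u, of "y k"] y k by (simp add: S_def Pi_iff)
      moreover have "u i = y i + K i k (y k) + (\<Sum>j\<in>I - {k}. K i k (K k j (u j)) + K i j (u j))"
        by (rule solves_systemD[OF solves i'])
      ultimately show ?thesis
        using False by (simp add: sum_remove_k sum_u sum.distrib algebra_simps)
    qed
  qed
qed

context
  fixes B :: real
  assumes bound: "\<And>i j v. i \<in> I \<Longrightarrow> j \<in> I \<Longrightarrow> v \<in> X j \<Longrightarrow> norm (K i j v) \<le> B * norm v"
    and B_nonneg: "0 \<le> B"
begin

lemma eliminated_rhs_sum_norm_le:
  assumes y: "y \<in> Pi I X"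
  shows "(\<Sum>i\<in>I - {k}. norm (y i + K i k (y k))) \<le> card (I - {k}) * ((1 + B) * (\<Sum>i\<in>I. norm (y i)))"
proof (rule sum_bounded_above)
  fix i assume i: "i \<in> I - {k}"
  have y_le: "norm (y l) \<le> (\<Sum>i\<in>I. norm (y i))" if "l \<in> I" for l
    by (rule member_le_sum) (use that finite_index in auto)
  have "norm (y i + K i k (y k)) \<le> norm (y i) + B * norm (y k)"
    using norm_triangle_ineq[of "y i" "K i k (y k)"] bound[of i k "y k"] i k y by (auto simp: Pi_iff)
  also have "\<dots> \<le> (1 + B) * (\<Sum>i\<in>I. norm (y i))"
    using y_le[of i] mult_left_mono[OF y_le[OF k] B_nonneg] i by (simp add: distrib_right)
  finally show "norm (y i + K i k (y k)) \<le> (1 + B) * (\<Sum>i\<in>I. norm (y i))" .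
qed

lemma extend_sum_norm_le:
  assumes y: "y \<in> Pi I X" and u: "u \<in> Pi (I - {k}) X"
  shows "(\<Sum>i\<in>I. norm ((u(k := y k + (\<Sum>j\<in>I - {k}. K k j (u j)))) i))
    \<le> (\<Sum>i\<in>I. norm (y i)) + (1 + B) * (\<Sum>i\<in>I - {k}. norm (u i))"
proof -
  define S where "S = (\<Sum>j\<in>I - {k}. K k j (u j))"
  have "norm S \<le> (\<Sum>j\<in>I - {k}. B * norm (u j))"
    unfolding S_def using u k by (intro order_trans[OF norm_sum] sum_mono bound) auto
  then have "norm (y k + S) \<le> norm (y k) + B * (\<Sum>i\<in>I - {k}. norm (u i))"
    using norm_triangle_ineq[of "y k" S] by (simp add: sum_distrib_left)
  moreover have "norm (y k) \<le> (\<Sum>i\<in>I. norm (y i))"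
    by (rule member_le_sum) (use k finite_index in auto)
  moreover have "(\<Sum>i\<in>I. norm ((u(k := y k + S)) i)) = norm (y k + S) + (\<Sum>i\<in>I - {k}. norm (u i))"
    unfolding sum_remove_k by (auto intro: sum.cong)
  ultimately show ?thesis unfolding S_def by (simp add: algebra_simps)
qed

lemma boundedly_solvable_eliminate:
  assumes reduced: "boundedly_solvable (I - {k}) X (\<lambda>i j v. K i k (K k j v) + K i j v)"
  shows "boundedly_solvable I X K"
proof -
  let ?J = "I - {k}" and ?M = "\<lambda>i j v. K i k (K k j v) + K i j v"
  obtain C where C: "0 \<le> C"
    and solve: "\<And>y. y \<in> Pi ?J X \<Longrightarrow> \<exists>u\<in>Pi ?J X. solves_system ?J ?M y u \<and>
                  (\<Sum>i\<in>?J. norm (u i)) \<le> C * (\<Sum>i\<in>?J. norm (y i))"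
    and unique: "\<And>y u u'. u \<in> Pi ?J X \<Longrightarrow> u' \<in> Pi ?J X \<Longrightarrow> solves_system ?J ?M y u \<Longrightarrow>
                  solves_system ?J ?M y u' \<Longrightarrow> \<forall>i\<in>?J. u i = u' i"
    using reduced unfolding boundedly_solvable_def by blast
  define C' where "C' = 1 + (1 + B) * C * (card ?J * (1 + B))"
  have "0 \<le> C'" using B_nonneg C by (simp add: C'_def)
  moreover have "\<exists>u\<in>Pi I X. solves_system I K y u \<and> (\<Sum>i\<in>I. norm (u i)) \<le> C' * (\<Sum>i\<in>I. norm (y i))"
    if y: "y \<in> Pi I X" for y
  proof -
    let ?Y = "\<Sum>i\<in>I. norm (y i)"
    have "(\<lambda>i. y i + K i k (y k)) \<in> Pi ?J X"
      using y k by (auto intro: subspace_add[OF subspace_X] K_maps)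
    then obtain u where u: "u \<in> Pi ?J X" and solves: "solves_system ?J ?M (\<lambda>i. y i + K i k (y k)) u"
      and u_le: "(\<Sum>i\<in>?J. norm (u i)) \<le> C * (\<Sum>i\<in>?J. norm (y i + K i k (y k)))"
      using solve by blast
    have "(\<Sum>i\<in>?J. norm (u i)) \<le> C * (card ?J * ((1 + B) * ?Y))"
      using u_le mult_left_mono[OF eliminated_rhs_sum_norm_le[OF y] C] by linarith
    from mult_left_mono[OF this, of "1 + B"] B_nonneg
    have "?Y + (1 + B) * (\<Sum>i\<in>?J. norm (u i)) \<le> C' * ?Y"
      by (simp add: C'_def algebra_simps)
    then have "(\<Sum>i\<in>I. norm ((u(k := y k + (\<Sum>j\<in>?J. K k j (u j)))) i)) \<le> C' * ?Y"
      using extend_sum_norm_le[OF y u] by linarith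
    then show ?thesis using solves_system_extend[OF y u solves] extend_in_Pi[OF y u] by blast
  qed
  moreover have "\<forall>i\<in>I. u i = u' i"
    if u: "u \<in> Pi I X" "u' \<in> Pi I X" "solves_system I K y u" "solves_system I K y u'" for y u u'
  proof -
    have "u \<in> Pi ?J X" "u' \<in> Pi ?J X" using u(1,2) by auto
    with unique solves_system_eliminate(2)[OF u(1,3)] solves_system_eliminate(2)[OF u(2,4)]
    have "\<forall>i\<in>?J. u i = u' i" by blast
    moreover from this have "(\<Sum>j\<in>?J. K k j (u j)) = (\<Sum>j\<in>?J. K k j (u' j))"
      by (intro sum.cong) auto
    then have "u k = u' k"
      using solves_system_eliminate(1)[OF u(1,3)] solves_system_eliminate(1)[OF u(2,4)] by simp
    ultimately show ?thesis by blast
  qed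
  ultimately show ?thesis unfolding boundedly_solvable_def by blast
qed

end

end

end

section \<open>Weights from the Cassini condition\<close>

lemma exists_greater_product_less_1:
  fixes r s :: real
  assumes "0 \<le> s" "r * s < 1"
  shows "\<exists>t>r. t * s < 1"
proof (intro exI conjI)
  let ?t = "r + (1 - r * s) / (2 * (s + 1))"
  show "r < ?t" using assms by simp
  have "s / (2 * (s + 1)) * (1 - r * s) < 1 * (1 - r * s)"
    using assms by (intro mult_strict_right_mono) (auto simp: field_simps)
  then show "?t * s < 1" using assms by (simp add: algebra_simps)
qed

text \<open>Since r i r j < 1 for i \<noteq> j, at most one column sum r p reaches 1. Raising the weight
  of row p to some t with r p < t < 1 / r j for all j \<noteq> p leaves column p at r p < t
  (as b p p = 0) and bounds every other weighted column sum by t r j < 1.\<close>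
lemma cassini_weights:
  fixes b :: "'i \<Rightarrow> 'i \<Rightarrow> real"
  assumes I: "finite I" and b0: "\<And>i j. i \<in> I \<Longrightarrow> j \<in> I \<Longrightarrow> 0 \<le> b i j"
    and diag: "\<And>j. j \<in> I \<Longrightarrow> b j j = 0"
    and product: "\<And>i j. i \<in> I \<Longrightarrow> j \<in> I \<Longrightarrow> i \<noteq> j \<Longrightarrow> (\<Sum>l\<in>I. b l i) * (\<Sum>l\<in>I. b l j) < 1"
  obtains w where "\<And>i. i \<in> I \<Longrightarrow> 0 < w i" "\<And>j. j \<in> I \<Longrightarrow> (\<Sum>i\<in>I. w i * b i j) < w j"
proof (cases "\<forall>j\<in>I. (\<Sum>l\<in>I. b l j) < 1")
  case True
  then show ?thesis by (intro that[of "\<lambda>_. 1"]) auto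
next
  case False
  define r where "r j = (\<Sum>l\<in>I. b l j)" for j
  obtain p where p: "p \<in> I" "1 \<le> r p" using False by (auto simp: r_def not_less)
  define s where "s = Max (insert 0 (r ` (I - {p})))"
  have s0: "0 \<le> s" and r_le_s: "\<And>j. j \<in> I - {p} \<Longrightarrow> r j \<le> s"
    using I by (auto simp: s_def)
  have "r p * s < 1"
  proof -
    have "s \<in> insert 0 (r ` (I - {p}))" unfolding s_def using I by (intro Max_in) auto
    then show ?thesis using product[of p] p by (auto simp: r_def)
  qed
  then obtain t where t_gt: "r p < t" and ts: "t * s < 1"
    using exists_greater_product_less_1[OF s0] by blast
  show ?thesis
  proof (rule that[of "\<lambda>i. if i = p then t else 1"])
    show "0 < (if i = p then t else 1)" for i using t_gt p by auto
    fix j assume j: "j \<in> I"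
    show "(\<Sum>i\<in>I. (if i = p then t else 1) * b i j) < (if j = p then t else 1)"
    proof (cases "j = p")
      case True
      then have "(\<Sum>i\<in>I. (if i = p then t else 1) * b i j) = r p"
        unfolding r_def using diag j by (intro sum.cong) auto
      with True t_gt show ?thesis by simp
    next
      case False
      have "(\<Sum>i\<in>I. (if i = p then t else 1) * b i j) \<le> (\<Sum>i\<in>I. t * b i j)"
        using t_gt p b0 j by (intro sum_mono mult_right_mono) auto
      also have "\<dots> = t * r j" by (simp add: r_def sum_distrib_left)
      also have "\<dots> \<le> t * s" using r_le_s[of j] j False t_gt p by (intro mult_left_mono) auto
      finally show ?thesis using ts False by simp
    qed
  qed
qed

section \<open>Resolvents\<close>

context
  fixes Y D :: "'a::complex_normed_vector set" and S :: "'a \<Rightarrow> 'a" and z :: complex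
  assumes resolvent: "z \<notin> op_spectrum Y D S"
begin

lemma bij_betw_shifted: "bij_betw (\<lambda>x. z *\<^sub>C x - S x) D Y"
  using resolvent by (simp add: op_spectrum_def bdd_invertible_def)

lemma resolv_eq_inv_into:
  assumes y: "y \<in> Y" shows "resolv D S z y = inv_into D (\<lambda>x. z *\<^sub>C x - S x) y"
  unfolding resolv_def
proof (rule the_equality)
  let ?T = "\<lambda>x. z *\<^sub>C x - S x"
  have "y \<in> ?T ` D" using bij_betw_shifted y by (simp add: bij_betw_def)
  then show "inv_into D ?T y \<in> D \<and> z *\<^sub>C inv_into D ?T y - S (inv_into D ?T y) = y"
    using inv_into_into[of y ?T D] f_inv_into_f[of y ?T D] by simp
  show "x = inv_into D ?T y" if "x \<in> D \<and> ?T x = y" for x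
    using bij_betw_inv_into_left[OF bij_betw_shifted, of x] that by simp
qed

lemma resolv_in_domain: "y \<in> Y \<Longrightarrow> resolv D S z y \<in> D"
  using bij_betw_shifted by (simp add: resolv_eq_inv_into bij_betw_def inv_into_into)

lemma resolv_right_inverse: "y \<in> Y \<Longrightarrow> z *\<^sub>C resolv D S z y - S (resolv D S z y) = y"
  using bij_betw_inv_into_right[OF bij_betw_shifted] by (simp add: resolv_eq_inv_into)

lemma resolv_left_inverse: "x \<in> D \<Longrightarrow> resolv D S z (z *\<^sub>C x - S x) = x"
  using bij_betw_inv_into_left[OF bij_betw_shifted] bij_betwE[OF bij_betw_shifted]
  by (simp add: resolv_eq_inv_into)

lemma resolv_bounded: "\<exists>C\<ge>0. \<forall>y\<in>Y. norm (resolv D S z y) \<le> C * norm y"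
proof -
  obtain C where "\<forall>y\<in>Y. norm (inv_into D (\<lambda>x. z *\<^sub>C x - S x) y) \<le> C * norm y"
    using resolvent by (auto simp: op_spectrum_def bdd_invertible_def)
  then have "\<forall>y\<in>Y. norm (resolv D S z y) \<le> max C 0 * norm y"
    by (auto simp: resolv_eq_inv_into intro: order_trans[OF _ mult_right_mono])
  then show ?thesis by (intro exI[of _ "max C 0"]) auto
qed

context
  assumes lin: "lin_op Y Y D S"
begin

lemma resolv_add:
  assumes y: "y \<in> Y" and y': "y' \<in> Y"
  shows "resolv D S z (y + y') = resolv D S z y + resolv D S z y'"
proof -
  let ?R = "resolv D S z"
  have D: "?R y \<in> D" "?R y' \<in> D" using y y' resolv_in_domain by auto
  have "z *\<^sub>C (?R y + ?R y') - S (?R y + ?R y') = y + y'"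
    using D lin resolv_right_inverse[OF y] resolv_right_inverse[OF y']
    by (simp add: lin_op_def scaleC_add_right algebra_simps)
  then have "?R (y + y') = ?R (z *\<^sub>C (?R y + ?R y') - S (?R y + ?R y'))" by simp
  also have "\<dots> = ?R y + ?R y'"
    using D lin by (intro resolv_left_inverse) (simp add: lin_op_def csubspace_def)
  finally show ?thesis .
qed

lemma resolv_scaleR:
  assumes y: "y \<in> Y" shows "resolv D S z (r *\<^sub>R y) = r *\<^sub>R resolv D S z y"
proof -
  let ?R = "resolv D S z"
  have D: "?R y \<in> D" using y resolv_in_domain by auto
  have "z *\<^sub>C (r *\<^sub>R ?R y) - S (r *\<^sub>R ?R y) = r *\<^sub>R (z *\<^sub>C ?R y - S (?R y))"
    using lin_op_scaleR[OF lin D] by (simp add: scaleC_scaleR_commute scaleR_diff_right)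
  then have "?R (r *\<^sub>R y) = ?R (z *\<^sub>C (r *\<^sub>R ?R y) - S (r *\<^sub>R ?R y))"
    using resolv_right_inverse[OF y] by simp
  also have "\<dots> = r *\<^sub>R ?R y"
    using D lin by (intro resolv_left_inverse) (simp add: lin_op_def csubspace_def scaleR_scaleC)
  finally show ?thesis .
qed

end

end

section \<open>Operator matrices\<close>

locale diagonal_resolvent =
  fixes n :: nat and X :: "nat \<Rightarrow> 'a::complex_normed_vector set" and D :: "nat \<Rightarrow> nat \<Rightarrow> 'a set"
    and A :: "nat \<Rightarrow> nat \<Rightarrow> 'a \<Rightarrow> 'a" and c d :: "nat \<Rightarrow> nat \<Rightarrow> real" and z :: complex
  assumes banach: "\<And>i. i < n \<Longrightarrow> banach_subspace (X i)"
    and lin: "\<And>i j. i < n \<Longrightarrow> j < n \<Longrightarrow> lin_op (X j) (X i) (D i j) (A i j)"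
    and dom: "\<And>i j. i < n \<Longrightarrow> j < n \<Longrightarrow> i \<noteq> j \<Longrightarrow> D j j \<subseteq> D i j"
    and cd_nonneg: "\<And>i j. i < n \<Longrightarrow> j < n \<Longrightarrow> i \<noteq> j \<Longrightarrow> 0 \<le> c i j \<and> 0 \<le> d i j"
    and rel_bdd: "\<And>i j x. i < n \<Longrightarrow> j < n \<Longrightarrow> i \<noteq> j \<Longrightarrow> x \<in> D j j \<Longrightarrow>
                    norm (A i j x) \<le> c i j * norm (A j j x) + d i j * norm x"
    and resolvent: "\<And>i. i < n \<Longrightarrow> z \<notin> diag_spec X D A i"
begin

abbreviation R :: "nat \<Rightarrow> 'a \<Rightarrow> 'a" where "R i \<equiv> resolv (D i i) (A i i) z"

lemma resolvent_op: "i < n \<Longrightarrow> z \<notin> op_spectrum (X i) (D i i) (A i i)"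
  using resolvent by (simp add: diag_spec_def)

lemma X_subspace: "i < n \<Longrightarrow> subspace (X i)"
  using banach by (simp add: banach_subspace_def csubspace_imp_subspace)

lemma X_scaleC: "i < n \<Longrightarrow> x \<in> X i \<Longrightarrow> a *\<^sub>C x \<in> X i"
  using banach by (simp add: banach_subspace_def csubspace_def)

lemma domain_subset: "i < n \<Longrightarrow> j < n \<Longrightarrow> D i j \<subseteq> X j"
  using lin by (simp add: lin_op_def)

lemma diag_domain_in: "i < n \<Longrightarrow> x \<in> D i i \<Longrightarrow> x \<in> X i"
  using domain_subset by blast

lemma A_maps: "i < n \<Longrightarrow> j < n \<Longrightarrow> x \<in> D i j \<Longrightarrow> A i j x \<in> X i"
  using lin[of i j] by (auto simp: lin_op_def)

lemma A_add: "i < n \<Longrightarrow> j < n \<Longrightarrow> x \<in> D i j \<Longrightarrow> x' \<in> D i j \<Longrightarrow> A i j (x + x') = A i j x + A i j x'"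
  using lin by (simp add: lin_op_def)

lemma R_in_domain: "j < n \<Longrightarrow> v \<in> X j \<Longrightarrow> R j v \<in> D j j"
  using resolv_in_domain[OF resolvent_op] .

lemma R_in_offdiag_domain: "i < n \<Longrightarrow> j < n \<Longrightarrow> v \<in> X j \<Longrightarrow> R j v \<in> D i j"
  using R_in_domain[of j v] dom[of i j] by (cases "i = j") auto

lemma R_right_inverse: "j < n \<Longrightarrow> v \<in> X j \<Longrightarrow> z *\<^sub>C R j v - A j j (R j v) = v"
  using resolv_right_inverse[OF resolvent_op] .

lemma R_bounded: "\<exists>C\<ge>0. \<forall>j<n. \<forall>v\<in>X j. norm (R j v) \<le> C * norm v"
proof -
  obtain C where C: "\<And>j. j < n \<Longrightarrow> 0 \<le> C j \<and> (\<forall>v\<in>X j. norm (R j v) \<le> C j * norm v)"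
    using resolv_bounded[OF resolvent_op] by metis
  have "norm (R j v) \<le> (\<Sum>l<n. C l) * norm v" if "j < n" "v \<in> X j" for j v
  proof -
    have "C j \<le> (\<Sum>l<n. C l)" using C that by (intro member_le_sum) auto
    then show ?thesis using C that by (meson mult_right_mono norm_ge_zero order_trans)
  qed
  moreover have "0 \<le> (\<Sum>l<n. C l)" using C by (auto intro: sum_nonneg)
  ultimately show ?thesis by blast
qed

definition K :: "nat \<Rightarrow> nat \<Rightarrow> 'a \<Rightarrow> 'a" where
  "K i j v = (if i = j then 0 else A i j (R j v))"

lemma K_maps: "i < n \<Longrightarrow> j < n \<Longrightarrow> v \<in> X j \<Longrightarrow> K i j v \<in> X i"
  by (simp add: K_def A_maps R_in_offdiag_domain subspace_0[OF X_subspace])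

lemma K_add: "i < n \<Longrightarrow> j < n \<Longrightarrow> v \<in> X j \<Longrightarrow> v' \<in> X j \<Longrightarrow> K i j (v + v') = K i j v + K i j v'"
  by (simp add: K_def A_add R_in_offdiag_domain resolv_add[OF resolvent_op lin])

lemma K_scaleR: "i < n \<Longrightarrow> j < n \<Longrightarrow> v \<in> X j \<Longrightarrow> K i j (r *\<^sub>R v) = r *\<^sub>R K i j v"
  by (simp add: K_def lin_op_scaleR[OF lin] R_in_offdiag_domain resolv_scaleR[OF resolvent_op lin])

text \<open>The relative bound turns into a bound on A i j (z - A j j)^-1 because
  A j j (z - A j j)^-1 v = z (z - A j j)^-1 v - v.\<close>
lemma K_bounded:
  assumes i: "i < n" and j: "j < n"
  shows "\<exists>M. \<forall>v\<in>X j. norm (K i j v) \<le> M * norm v"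
proof (cases "i = j")
  case False
  obtain C where C: "0 \<le> C" "\<And>v. v \<in> X j \<Longrightarrow> norm (R j v) \<le> C * norm v"
    using R_bounded j by blast
  have cd: "0 \<le> c i j" "0 \<le> d i j" using cd_nonneg i j False by auto
  have "norm (K i j v) \<le> (c i j * (cmod z * C + 1) + d i j * C) * norm v" if v: "v \<in> X j" for v
  proof -
    have "A j j (R j v) = z *\<^sub>C R j v - v" using R_right_inverse[OF j v] by (simp add: algebra_simps)
    then have "norm (A j j (R j v)) \<le> cmod z * norm (R j v) + norm v"
      using norm_triangle_ineq4[of "z *\<^sub>C R j v" v] by (simp add: norm_scaleC)
    also have "\<dots> \<le> (cmod z * C + 1) * norm v"
      using mult_left_mono[OF C(2)[OF v], of "cmod z"] by (simp add: algebra_simps)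
    finally have "norm (A j j (R j v)) \<le> (cmod z * C + 1) * norm v" .
    then have "norm (K i j v) \<le> c i j * ((cmod z * C + 1) * norm v) + d i j * (C * norm v)"
      using rel_bdd[OF i j False R_in_domain[OF j v]] mult_left_mono[OF C(2)[OF v] cd(2)] cd(1)
      by (simp add: K_def False) (smt (verit) mult_left_mono)
    then show ?thesis by (simp add: algebra_simps)
  qed
  then show ?thesis by blast
qed (auto simp: K_def intro: exI[of _ 0])

sublocale coupled: coupled_system "{..<n}" X K
  using banach K_maps K_add X_subspace
  by unfold_locales (auto simp: banach_subspace_def)

definition b :: "nat \<Rightarrow> nat \<Rightarrow> real" where
  "b i j = enn2real (opnorm (X j) (K i j))"

definition b_through :: "nat \<Rightarrow> nat \<Rightarrow> nat \<Rightarrow> real" where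
  "b_through k i j = enn2real (opnorm (X j) (\<lambda>v. K i k (K k j v)))"

lemma b_nonneg: "0 \<le> b i j"
  by (simp add: b_def)

lemma b_through_nonneg: "0 \<le> b_through k i j"
  by (simp add: b_through_def)

lemma b_diag: "b j j = 0"
proof -
  have "opnorm (X j) (K j j) \<le> ennreal 0" by (rule opnorm_le_ennreal) (simp_all add: K_def)
  then show ?thesis by (simp add: b_def)
qed

lemma opnorm_K_finite: "i < n \<Longrightarrow> j < n \<Longrightarrow> opnorm (X j) (K i j) < \<infinity>"
  using K_bounded opnorm_less_top by metis

lemma K_le: "i < n \<Longrightarrow> j < n \<Longrightarrow> v \<in> X j \<Longrightarrow> norm (K i j v) \<le> b i j * norm v"
  unfolding b_def by (rule norm_le_opnorm[OF X_subspace K_scaleR opnorm_K_finite])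

lemma opnorm_K_through_finite:
  assumes "i < n" "k < n" "j < n" shows "opnorm (X j) (\<lambda>v. K i k (K k j v)) < \<infinity>"
proof (rule opnorm_less_top)
  fix v assume v: "v \<in> X j"
  have "norm (K i k (K k j v)) \<le> b i k * norm (K k j v)" using assms v by (intro K_le K_maps)
  also have "\<dots> \<le> b i k * (b k j * norm v)" using assms v by (intro mult_left_mono K_le b_nonneg)
  finally show "norm (K i k (K k j v)) \<le> (b i k * b k j) * norm v" by (simp add: mult.assoc)
qed

lemma K_through_le:
  "i < n \<Longrightarrow> k < n \<Longrightarrow> j < n \<Longrightarrow> v \<in> X j \<Longrightarrow> norm (K i k (K k j v)) \<le> b_through k i j * norm v"
  unfolding b_through_def
  by (rule norm_le_opnorm[OF X_subspace _ opnorm_K_through_finite]) (simp_all add: K_scaleR K_maps)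

lemma col_sum_eq: "i < n \<Longrightarrow> col_sum n X D A i z = ennreal (\<Sum>l<n. b l i)"
proof -
  assume i: "i < n"
  have "col_sum n X D A i z = (\<Sum>l\<in>{..<n} - {i}. ennreal (b l i))"
    unfolding col_sum_def
  proof (rule sum.cong[OF refl])
    fix l assume l: "l \<in> {..<n} - {i}"
    then have "(\<lambda>v. A l i (R i v)) = K l i" by (auto simp: K_def)
    then show "opnorm (X i) (\<lambda>v. A l i (R i v)) = ennreal (b l i)"
      using opnorm_K_finite l i by (simp add: b_def ennreal_enn2real)
  qed
  also have "\<dots> = ennreal (\<Sum>l\<in>{..<n} - {i}. b l i)" by (simp add: sum_ennreal b_nonneg)
  also have "(\<Sum>l\<in>{..<n} - {i}. b l i) = (\<Sum>l<n. b l i)"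
    using i by (simp add: sum_diff1 b_diag)
  finally show ?thesis .
qed

text \<open>The summand i = j of R*_kj lacks its second term; this matches b j j = 0.\<close>
lemma Rstar_eq:
  assumes k: "k < n" and j: "j < n" "j \<noteq> k"
  shows "Rstar n X D A k j z = ennreal (\<Sum>i\<in>{..<n} - {k}. b_through k i j + b i j)"
proof -
  have "Rstar n X D A k j z = (\<Sum>i\<in>{..<n} - {k}. ennreal (b_through k i j + b i j))"
    unfolding Rstar_def
  proof (rule sum.cong[OF refl])
    fix i assume i: "i \<in> {..<n} - {k}"
    have "(\<lambda>v. A i k (R k (A k j (R j v)))) = (\<lambda>v. K i k (K k j v))" using i j by (auto simp: K_def)
    moreover have "(if i = j then 0 else opnorm (X j) (\<lambda>v. A i j (R j v))) = ennreal (b i j)"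
    proof (cases "i = j")
      case False
      then have "(\<lambda>v. A i j (R j v)) = K i j" by (auto simp: K_def)
      with False show ?thesis using opnorm_K_finite[of i j] i j by (simp add: b_def ennreal_enn2real)
    qed (simp add: b_diag)
    moreover have "opnorm (X j) (\<lambda>v. K i k (K k j v)) = ennreal (b_through k i j)"
      using opnorm_K_through_finite[of i k j] i k j by (simp add: b_through_def ennreal_enn2real)
    ultimately show "opnorm (X j) (\<lambda>v. A i k (R k (A k j (R j v)))) +
        (if i = j then 0 else opnorm (X j) (\<lambda>v. A i j (R j v))) = ennreal (b_through k i j + b i j)"
      by (simp add: b_nonneg b_through_nonneg)
  qed
  also have "\<dots> = ennreal (\<Sum>i\<in>{..<n} - {k}. b_through k i j + b i j)"
    by (rule sum_ennreal) (simp add: b_nonneg b_through_nonneg)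
  finally show ?thesis .
qed

definition shifted_diag :: "(nat \<Rightarrow> 'a) \<Rightarrow> nat \<Rightarrow> 'a" where
  "shifted_diag x i = z *\<^sub>C x i - A i i (x i)"

definition shifted_matrix :: "(nat \<Rightarrow> 'a) \<Rightarrow> nat \<Rightarrow> 'a" where
  "shifted_matrix x i = (if i < n then z *\<^sub>C x i - (\<Sum>j<n. A i j (x j)) else 0)"

lemma shifted_diag_in:
  assumes x: "x \<in> prod_space n (\<lambda>i. D i i)" shows "shifted_diag x \<in> Pi {..<n} X"
proof
  fix i assume "i \<in> {..<n}"
  then have i: "i < n" and xi: "x i \<in> D i i" using x by (auto simp: prod_space_def)
  show "shifted_diag x i \<in> X i"
    unfolding shifted_diag_def
    by (simp add: subspace_diff[OF X_subspace[OF i]] X_scaleC[OF i] diag_domain_in[OF i xi] A_maps[OF i i xi])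
qed

lemma resolv_shifted_diag: "x \<in> prod_space n (\<lambda>i. D i i) \<Longrightarrow> i < n \<Longrightarrow> R i (shifted_diag x i) = x i"
  using resolv_left_inverse[OF resolvent_op] by (simp add: shifted_diag_def prod_space_def)

text \<open>The factorisation z - \<A> = (1 - K) (z - diag A) on the domain of \<A>.\<close>
lemma solves_system_shifted:
  assumes x: "x \<in> prod_space n (\<lambda>i. D i i)"
  shows "solves_system {..<n} K (shifted_matrix x) (shifted_diag x)"
  unfolding solves_system_def
proof
  fix i assume "i \<in> {..<n}"
  then have i: "i < n" by simp
  have "(\<Sum>j<n. K i j (shifted_diag x j)) = (\<Sum>j\<in>{..<n} - {i}. A i j (x j))"
    using resolv_shifted_diag[OF x] by (auto simp: K_def sum.If_cases Int_def intro!: sum.cong)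
  moreover have "(\<Sum>j<n. A i j (x j)) = A i i (x i) + (\<Sum>j\<in>{..<n} - {i}. A i j (x j))"
    using i by (simp add: sum.remove)
  ultimately show "shifted_diag x i = shifted_matrix x i + (\<Sum>j\<in>{..<n}. K i j (shifted_diag x j))"
    using i by (simp add: shifted_matrix_def shifted_diag_def)
qed

lemma shifted_matrix_in:
  assumes x: "x \<in> prod_space n (\<lambda>i. D i i)" shows "shifted_matrix x \<in> prod_space n X"
proof -
  have "shifted_matrix x \<in> Pi {..<n} X"
    by (rule coupled.solves_system_rhs_in[OF shifted_diag_in[OF x] solves_system_shifted[OF x]])
  then show ?thesis by (auto simp: prod_space_def shifted_matrix_def Pi_iff)
qed

lemma shifted_matrix_resolv:
  assumes y: "y \<in> prod_space n X" and u: "u \<in> Pi {..<n} X" and solves: "solves_system {..<n} K y u"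
  shows "shifted_matrix (\<lambda>i. if i < n then R i (u i) else 0) = y"
proof
  let ?x = "\<lambda>i. if i < n then R i (u i) else 0"
  have x: "?x \<in> prod_space n (\<lambda>i. D i i)" using u R_in_domain by (auto simp: prod_space_def)
  have diag: "shifted_diag ?x i = u i" if "i < n" for i
    using R_right_inverse[OF that, of "u i"] u that by (simp add: shifted_diag_def Pi_iff)
  fix i show "shifted_matrix ?x i = y i"
  proof (cases "i < n")
    case True
    have "shifted_matrix ?x i = shifted_diag ?x i - (\<Sum>j<n. K i j (shifted_diag ?x j))"
      using solves_systemD[OF solves_system_shifted[OF x], of i] True by simp
    also have "\<dots> = u i - (\<Sum>j<n. K i j (u j))" using diag True by simp
    also have "\<dots> = y i" using solves_systemD[OF solves, of i] True by simp
    finally show ?thesis .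
  qed (use y in \<open>simp add: shifted_matrix_def prod_space_def\<close>)
qed

lemma boundedly_solvable_imp_not_spectrum:
  assumes "boundedly_solvable {..<n} X K"
  shows "z \<notin> matrix_spectrum n X D A"
proof -
  let ?Dom = "prod_space n (\<lambda>i. D i i)" and ?Y = "prod_space n X"
  obtain C where C: "0 \<le> C"
    and solve: "\<And>y. y \<in> Pi {..<n} X \<Longrightarrow> \<exists>u\<in>Pi {..<n} X. solves_system {..<n} K y u \<and>
                  (\<Sum>i<n. norm (u i)) \<le> C * (\<Sum>i<n. norm (y i))"
    and unique: "\<And>y u u'. u \<in> Pi {..<n} X \<Longrightarrow> u' \<in> Pi {..<n} X \<Longrightarrow> solves_system {..<n} K y u \<Longrightarrow>
                  solves_system {..<n} K y u' \<Longrightarrow> \<forall>i\<in>{..<n}. u i = u' i"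
    using assms unfolding boundedly_solvable_def by blast
  obtain CR where CR: "0 \<le> CR" "\<And>i v. i < n \<Longrightarrow> v \<in> X i \<Longrightarrow> norm (R i v) \<le> CR * norm v"
    using R_bounded by blast
  have "inj_on shifted_matrix ?Dom"
  proof (rule inj_onI)
    fix x x' assume x: "x \<in> ?Dom" and x': "x' \<in> ?Dom" and "shifted_matrix x = shifted_matrix x'"
    then have "\<forall>i\<in>{..<n}. shifted_diag x i = shifted_diag x' i"
      using unique[OF shifted_diag_in[OF x] shifted_diag_in[OF x'] solves_system_shifted[OF x]]
        solves_system_shifted[OF x'] by simp
    show "x = x'"
    proof
      fix i show "x i = x' i"
        using resolv_shifted_diag[OF x, of i] resolv_shifted_diag[OF x', of i]
          \<open>\<forall>i\<in>{..<n}. shifted_diag x i = shifted_diag x' i\<close> x x'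
        by (cases "i < n") (auto simp: prod_space_def)
    qed
  qed
  moreover have "shifted_matrix ` ?Dom \<subseteq> ?Y" using shifted_matrix_in by blast
  moreover have "\<exists>x\<in>?Dom. shifted_matrix x = y \<and> prod_norm n x \<le> (CR * C) * prod_norm n y"
    if y: "y \<in> ?Y" for y
  proof -
    obtain u where u: "u \<in> Pi {..<n} X" and solves: "solves_system {..<n} K y u"
      and u_le: "(\<Sum>i<n. norm (u i)) \<le> C * (\<Sum>i<n. norm (y i))"
      using solve[of y] y by (auto simp: prod_space_def)
    define x where "x i = (if i < n then R i (u i) else 0)" for i
    have "prod_norm n x \<le> (\<Sum>i<n. CR * norm (u i))"
      unfolding prod_norm_def x_def using CR(2) u by (intro sum_mono) auto
    also have "\<dots> \<le> CR * (C * (\<Sum>i<n. norm (y i)))"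
      using mult_left_mono[OF u_le CR(1)] by (simp add: sum_distrib_left)
    finally have "prod_norm n x \<le> (CR * C) * prod_norm n y" by (simp add: prod_norm_def mult.assoc)
    moreover have "x \<in> ?Dom" using u R_in_domain by (auto simp: x_def prod_space_def)
    ultimately show ?thesis using shifted_matrix_resolv[OF y u solves] by (auto simp: x_def[abs_def])
  qed
  ultimately have "bdd_invertible (prod_norm n) ?Dom ?Y shifted_matrix"
    by (rule bdd_invertibleI)
  then show ?thesis by (simp add: matrix_spectrum_def shifted_matrix_def[abs_def])
qed

lemma not_spectrum_outside_cassini:
  assumes "z \<notin> cassini_union n X D A"
  shows "z \<notin> matrix_spectrum n X D A"
proof -
  have ordered: "(\<Sum>l<n. b l i) * (\<Sum>l<n. b l j) < 1" if ij: "i < j" "j < n" for i j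
  proof -
    have "z \<notin> cassini n X D A i j" using assms ij unfolding cassini_union_def by auto
    then have "\<not> 1 \<le> col_sum n X D A i z * col_sum n X D A j z"
      using resolvent ij by (auto simp: cassini_def)
    then show ?thesis
      using ij by (simp add: col_sum_eq ennreal_mult[symmetric] sum_nonneg b_nonneg ennreal_ge_1)
  qed
  have "(\<Sum>l<n. b l i) * (\<Sum>l<n. b l j) < 1" if "i < n" "j < n" "i \<noteq> j" for i j
    using ordered[of i j] ordered[of j i] that by (cases "i < j") (simp_all add: mult.commute)
  then obtain w where "\<And>i. i < n \<Longrightarrow> 0 < w i" "\<And>j. j < n \<Longrightarrow> (\<Sum>i<n. w i * b i j) < w j"
    using cassini_weights[of "{..<n}" b] b_nonneg b_diag by auto
  then have "boundedly_solvable {..<n} X K"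
    using K_le by (intro coupled.weighted_contraction_boundedly_solvable[where b = b and w = w]) auto
  then show ?thesis by (rule boundedly_solvable_imp_not_spectrum)
qed

lemma not_spectrum_outside_Sstar:
  assumes k: "k < n" and outside: "z \<notin> Sstar n X D A k"
  shows "z \<notin> matrix_spectrum n X D A"
proof -
  let ?J = "{..<n} - {k}" and ?M = "\<lambda>i j v. K i k (K k j v) + K i j v"
  interpret reduced: coupled_system ?J X ?M
    using coupled.coupled_system_eliminate k by simp
  have column: "(\<Sum>i\<in>?J. b_through k i j + b i j) < 1" if j: "j \<in> ?J" for j
  proof -
    have "z \<notin> Sstar2 n X D A k j" using outside j unfolding Sstar_def by blast
    then have "\<not> 1 \<le> Rstar n X D A k j z" using resolvent k j by (auto simp: Sstar2_def)
    then show ?thesis using j k by (simp add: Rstar_eq ennreal_ge_1)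
  qed
  have "boundedly_solvable ?J X ?M"
  proof (rule reduced.weighted_contraction_boundedly_solvable[where w = "\<lambda>_. 1"])
    fix i j v assume ij: "i \<in> ?J" "j \<in> ?J" and v: "v \<in> X j"
    show "norm (?M i j v) \<le> (b_through k i j + b i j) * norm v"
      using norm_triangle_ineq[of "K i k (K k j v)" "K i j v"] K_through_le[of i k j v] K_le[of i j v] ij k v
      by (simp add: distrib_right)
  qed (use column in auto)
  moreover define B where "B = (\<Sum>i<n. \<Sum>j<n. b i j)"
  have "b i j \<le> B" if "i < n" "j < n" for i j
  proof -
    have "b i j \<le> (\<Sum>j<n. b i j)" using that b_nonneg by (intro member_le_sum) auto
    also have "\<dots> \<le> B" unfolding B_def using that b_nonneg by (intro member_le_sum sum_nonneg) auto
    finally show ?thesis .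
  qed
  then have "norm (K i j v) \<le> B * norm v" if "i < n" "j < n" "v \<in> X j" for i j v
    using K_le[OF that] that by (meson mult_right_mono norm_ge_zero order_trans)
  moreover have "0 \<le> B" unfolding B_def by (intro sum_nonneg b_nonneg)
  ultimately have "boundedly_solvable {..<n} X K"
    using coupled.boundedly_solvable_eliminate[of k B] k by (simp add: K_def)
  then show ?thesis by (rule boundedly_solvable_imp_not_spectrum)
qed

end

lemma diag_spec_subset_cassini_union:
  assumes "2 \<le> n" "i < n"
  shows "diag_spec X D A i \<subseteq> cassini_union n X D A"
proof (cases "i = 0")
  case True
  then have "diag_spec X D A i \<subseteq> cassini n X D A 0 1" by (auto simp: cassini_def)
  then show ?thesis using assms unfolding cassini_union_def by force
next
  case False
  then have "diag_spec X D A i \<subseteq> cassini n X D A 0 i" by (auto simp: cassini_def)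
  then show ?thesis using assms False unfolding cassini_union_def by force
qed

lemma diag_spec_subset_Sstar:
  assumes "2 \<le> n" "i < n" "k < n"
  shows "diag_spec X D A i \<subseteq> Sstar n X D A k"
proof (cases "i = k")
  case True
  define j :: nat where "j = (if k = 0 then 1 else 0)"
  have "j \<in> {..<n} - {k}" using assms by (auto simp: j_def)
  moreover have "diag_spec X D A i \<subseteq> Sstar2 n X D A k j" using True by (auto simp: Sstar2_def)
  ultimately show ?thesis unfolding Sstar_def by blast
next
  case False
  then have "diag_spec X D A i \<subseteq> Sstar2 n X D A k i" by (auto simp: Sstar2_def)
  then show ?thesis using assms False unfolding Sstar_def by blast
qed

theorem theorem5p6:
  fixes n :: nat
    and X :: "nat \<Rightarrow> 'a::complex_normed_vector set"
    and D :: "nat \<Rightarrow> nat \<Rightarrow> 'a set"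
    and A :: "nat \<Rightarrow> nat \<Rightarrow> 'a \<Rightarrow> 'a"
    and c d :: "nat \<Rightarrow> nat \<Rightarrow> real"
  assumes n2: "n \<ge> 2"
    and banach: "\<forall>i<n. banach_subspace (X i)"
    and lin: "\<forall>i<n. \<forall>j<n. lin_op (X j) (X i) (D i j) (A i j)"
    and closed_diag: "\<forall>i<n. closed_op (D i i) (A i i)"
    and dom: "\<forall>i<n. \<forall>j<n. i \<noteq> j \<longrightarrow> D j j \<subseteq> D i j"
    and cd_nonneg: "\<forall>i<n. \<forall>j<n. i \<noteq> j \<longrightarrow> c i j \<ge> 0 \<and> d i j \<ge> 0"
    and rel_bdd: "\<forall>i<n. \<forall>j<n. i \<noteq> j \<longrightarrow>
                    (\<forall>x\<in>D j j. norm (A i j x) \<le> c i j * norm (A j j x) + d i j * norm x)"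
    and c_sum: "\<forall>j<n. (\<Sum>i\<in>{..<n} - {j}. c i j) < 1"
  shows "matrix_spectrum n X D A \<subseteq> cassini_union n X D A \<and>
         matrix_spectrum n X D A \<subseteq> (\<Inter>k<n. Sstar n X D A k)"
proof -
  have "z \<in> cassini_union n X D A \<and> (\<forall>k<n. z \<in> Sstar n X D A k)"
    if z: "z \<in> matrix_spectrum n X D A" for z
  proof (cases "\<exists>i<n. z \<in> diag_spec X D A i")
    case True
    then show ?thesis using diag_spec_subset_cassini_union diag_spec_subset_Sstar n2 by blast
  next
    case False
    then interpret diagonal_resolvent n X D A c d z
      using banach lin dom cd_nonneg rel_bdd by unfold_locales auto
    show ?thesis using z not_spectrum_outside_cassini not_spectrum_outside_Sstar by blast
  qed
  then show ?thesis by blast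
qed

end
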